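(* Let $\mathcal T$ be a finite set of time steps and $X^{(t')}\in\mathbb{R}_{\ge0}^{m\times n}$ for $t'\in\mathcal T$, and let $\bar X=\sum_{t'\in\mathcal T}X^{(t')}$. For any $t\in\mathcal T$, let $p^{(t)}=X^{(t)}\mathbf 1_n$ and $q^{(t)}=(X^{(t)})^T\mathbf 1_m$. Then IPF (with zero-marginal handling) on $(\bar X,p^{(t)},q^{(t)})$ converges, i.e. the sequence of scaled matrices $\mathrm{diag}(d^0)\bar X\mathrm{diag}(d^1)$ converges to a matrix with row sums $p^{(t)}$ and column sums $q^{(t)}$.
   Context: IPF with zero-marginal handling on $(X,p,q)$, $X\in\mathbb{R}_{\ge0}^{m\times n}$, $p\in\mathbb{R}_{\ge0}^m$, $q\in\mathbb{R}_{\ge0}^n$, $\sum_ip_i=\sum_jq_j$: start with $d^0=\mathbf 1_m$, $d^1=\mathbf 1_n$; alternately update rows (for each $i$: $d^0_i\leftarrow0$ if $p_i=0$, else $d^0_i\leftarrow p_i/\sum_jX_{ij}d^1_j$) and columns (for each $j$: $d^1_j\leftarrow0$ if $q_j=0$, else $d^1_j\leftarrow q_j/\sum_iX_{ij}d^0_i$); after each update the scaled matrix is $\mathrm{diag}(d^0)X\mathrm{diag}(d^1)$. *)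

theory Defs
  imports Complex_Main
begin

text \<open>Matrices in R^{m x n} are represented as functions nat => nat => real, only the
entries with i < m, j < n being relevant; vectors as nat => real.\<close>

definition ipf_row_update ::
  "nat \<Rightarrow> (nat \<Rightarrow> nat \<Rightarrow> real) \<Rightarrow> (nat \<Rightarrow> real) \<Rightarrow> (nat \<Rightarrow> real) \<Rightarrow> (nat \<Rightarrow> real)" where
  "ipf_row_update n X p d1 =
     (\<lambda>i. if p i = 0 then 0 else p i / (\<Sum>j<n. X i j * d1 j))"

definition ipf_col_update ::
  "nat \<Rightarrow> (nat \<Rightarrow> nat \<Rightarrow> real) \<Rightarrow> (nat \<Rightarrow> real) \<Rightarrow> (nat \<Rightarrow> real) \<Rightarrow> (nat \<Rightarrow> real)" where
  "ipf_col_update m X q d0 =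
     (\<lambda>j. if q j = 0 then 0 else q j / (\<Sum>i<m. X i j * d0 i))"

fun ipf_scalings ::
  "nat \<Rightarrow> nat \<Rightarrow> (nat \<Rightarrow> nat \<Rightarrow> real) \<Rightarrow> (nat \<Rightarrow> real) \<Rightarrow> (nat \<Rightarrow> real) \<Rightarrow> nat
     \<Rightarrow> (nat \<Rightarrow> real) \<times> (nat \<Rightarrow> real)" where
  "ipf_scalings m n X p q 0 = ((\<lambda>_. 1), (\<lambda>_. 1))"
| "ipf_scalings m n X p q (Suc k) =
     (let (d0, d1) = ipf_scalings m n X p q k in
      if even k then (ipf_row_update n X p d1, d1)
      else (d0, ipf_col_update m X q d0))"

definition ipf_matrix ::
  "nat \<Rightarrow> nat \<Rightarrow> (nat \<Rightarrow> nat \<Rightarrow> real) \<Rightarrow> (nat \<Rightarrow> real) \<Rightarrow> (nat \<Rightarrow> real) \<Rightarrow> nat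
     \<Rightarrow> nat \<Rightarrow> nat \<Rightarrow> real" where
  "ipf_matrix m n X p q k =
     (\<lambda>i j. fst (ipf_scalings m n X p q k) i * X i j * snd (ipf_scalings m n X p q k) j)"

definition ipf_converges ::
  "nat \<Rightarrow> nat \<Rightarrow> (nat \<Rightarrow> nat \<Rightarrow> real) \<Rightarrow> (nat \<Rightarrow> real) \<Rightarrow> (nat \<Rightarrow> real) \<Rightarrow> bool" where
  "ipf_converges m n X p q \<longleftrightarrow>
     (\<exists>L. (\<forall>i<m. \<forall>j<n. (\<lambda>k. ipf_matrix m n X p q k i j) \<longlonglongrightarrow> L i j)
        \<and> (\<forall>i<m. (\<Sum>j<n. L i j) = p i)
        \<and> (\<forall>j<n. (\<Sum>i<m. L i j) = q j))"

end

theory Submission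
  imports Defs
begin

text \<open>
  Since \<open>0 \<le> X\<^sup>t \<le> \<Sum>\<^sub>s X\<^sup>s\<close>, the matrix \<open>X\<^sup>t\<close> has the target margins and is supported
  in the support of the summed matrix; IPF converges whenever such a feasible matrix exists.
  For feasible \<open>Z\<close>, the generalised Kullback-Leibler divergence of \<open>Z\<close> from the scaled
  matrix \<open>M\<^sub>k\<close> equals a constant depending only on \<open>Z\<close> minus the dual potential
  \<open>G\<^sub>k = \<Sum>\<^sub>i p\<^sub>i ln d\<^sup>0\<^sub>i + \<Sum>\<^sub>j q\<^sub>j ln d\<^sup>1\<^sub>j\<close>. Each update raises \<open>G\<^sub>k\<close> by the divergence
  of the target margins from the current ones, so \<open>G\<^sub>k\<close> increases, is bounded, and its
  increments tend to 0; as the squared Hellinger distance is dominated by the divergence,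
  the margins converge. Hence every limit point \<open>L\<close> of the bounded sequence \<open>M\<^sub>k\<close> is feasible.
  Applied to \<open>Z = L\<close>, the identity shows that the divergence of \<open>L\<close> from \<open>M\<^sub>k\<close> converges;
  it tends to 0 along a subsequence, hence along the whole sequence, so \<open>M\<^sub>k \<longrightarrow> L\<close>.
\<close>

text \<open>As \<open>ln 0 = 0\<close> in HOL, this is the intended \<open>x ln (x / y) - x + y\<close> only if \<open>y > 0\<close> or
  \<open>x = 0\<close>; hence the positivity side conditions below.\<close>

definition kl_term :: "real \<Rightarrow> real \<Rightarrow> real" where
  "kl_term x y = x * (ln x - ln y) - x + y"

lemma kl_term_0_left [simp]: "kl_term 0 y = y"
  by (simp add: kl_term_def)

lemma sqrt_diff_square_le_kl_term:
  assumes "0 \<le> x" "0 \<le> y" "0 < x \<Longrightarrow> 0 < y"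
  shows "(sqrt x - sqrt y)\<^sup>2 \<le> kl_term x y"
proof (cases "x = 0")
  case True
  then show ?thesis using assms by simp
next
  case False
  then have "0 < x" "0 < y" using assms by auto
  define a b where "a = sqrt x" and "b = sqrt y"
  have a: "0 < a" "x = a\<^sup>2" and b: "0 < b" "y = b\<^sup>2"
    using \<open>0 < x\<close> \<open>0 < y\<close> by (auto simp: a_def b_def)
  have "ln b - ln a \<le> b / a - 1"
    using ln_le_minus_one[of "b / a"] a b by (simp add: ln_divide_pos)
  then have "a\<^sup>2 * (1 - b / a) \<le> a\<^sup>2 * (ln a - ln b)"
    by (intro mult_left_mono) auto
  moreover have "a\<^sup>2 * (1 - b / a) = a\<^sup>2 - a * b"
    using a(1) by (simp add: field_simps power2_eq_square)
  moreover have "kl_term x y = 2 * (a\<^sup>2 * (ln a - ln b)) - a\<^sup>2 + b\<^sup>2"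
    using a b by (simp add: kl_term_def ln_realpow algebra_simps)
  ultimately have "(a - b)\<^sup>2 \<le> kl_term x y"
    by (simp add: power2_diff)
  then show ?thesis by (simp add: a_def b_def)
qed

lemma kl_term_nonneg: "0 \<le> x \<Longrightarrow> 0 \<le> y \<Longrightarrow> (0 < x \<Longrightarrow> 0 < y) \<Longrightarrow> 0 \<le> kl_term x y"
  using sqrt_diff_square_le_kl_term[of x y] by (meson order_trans zero_le_power2)

lemma tendsto_kl_term_0:
  assumes "0 \<le> x" "y \<longlonglongrightarrow> x"
  shows "(\<lambda>k. kl_term x (y k)) \<longlonglongrightarrow> 0"
proof (cases "x = 0")
  case True
  then show ?thesis using assms by simp
next
  case False
  have "(\<lambda>k. x * (ln x - ln (y k)) - x + y k) \<longlonglongrightarrow> x * (ln x - ln x) - x + x"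
    using assms False by (intro tendsto_intros) auto
  then show ?thesis by (simp add: kl_term_def)
qed

lemma LIMSEQ_if_sqrt_diff_square_le:
  fixes u e :: "nat \<Rightarrow> real"
  assumes "0 \<le> a" "\<And>k. 0 \<le> u k" "\<And>k. (sqrt a - sqrt (u k))\<^sup>2 \<le> e k" "e \<longlonglongrightarrow> 0"
  shows "u \<longlonglongrightarrow> a"
proof -
  have dist_bound: "norm (sqrt (u k) - sqrt a) \<le> norm (sqrt (e k)) * 1" for k
  proof -
    have "sqrt ((sqrt a - sqrt (u k))\<^sup>2) \<le> sqrt (e k)"
      using assms(3) real_sqrt_le_mono by blast
    then have "\<bar>sqrt a - sqrt (u k)\<bar> \<le> sqrt (e k)" by (simp only: real_sqrt_abs)
    then show ?thesis by (simp add: abs_minus_commute)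
  qed
  have "(\<lambda>k. sqrt (e k)) \<longlonglongrightarrow> 0"
    using tendsto_real_sqrt[OF assms(4)] by simp
  then have "(\<lambda>k. sqrt (u k) - sqrt a) \<longlonglongrightarrow> 0"
    by (rule tendsto_0_le[where K = 1]) (use dist_bound in auto)
  then have "(\<lambda>k. sqrt (u k)) \<longlonglongrightarrow> sqrt a"
    by (simp add: LIM_zero_iff)
  then have "(\<lambda>k. (sqrt (u k))\<^sup>2) \<longlonglongrightarrow> (sqrt a)\<^sup>2"
    by (rule tendsto_power)
  then show ?thesis using assms(1,2) by simp
qed

lemma bounded_family_convergent_subseq:
  fixes u :: "nat \<Rightarrow> 'b \<Rightarrow> real"
  assumes "finite S" "\<And>k s. s \<in> S \<Longrightarrow> \<bar>u k s\<bar> \<le> B"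
  shows "\<exists>\<sigma>. strict_mono \<sigma> \<and> (\<forall>s\<in>S. convergent (\<lambda>k. u (\<sigma> k) s))"
  using assms
proof (induction S rule: finite_induct)
  case empty
  show ?case by (intro exI[of _ id]) (auto simp: strict_mono_def)
next
  case (insert x S)
  then obtain \<sigma> where \<sigma>: "strict_mono \<sigma>" "\<forall>s\<in>S. convergent (\<lambda>k. u (\<sigma> k) s)"
    by auto
  obtain f where f: "strict_mono f" "monoseq (\<lambda>k. u (\<sigma> (f k)) x)"
    using seq_monosub[of "\<lambda>k. u (\<sigma> k) x"] by auto
  have "Bseq (\<lambda>k. u (\<sigma> (f k)) x)"
    using insert.prems by (intro BseqI'[where K = B]) auto
  then have "convergent (\<lambda>k. u (\<sigma> (f k)) x)"
    using f(2) Bseq_monoseq_convergent by blast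
  moreover have "convergent (\<lambda>k. u (\<sigma> (f k)) s)" if "s \<in> S" for s
    using convergent_subseq_convergent[OF \<sigma>(2)[rule_format, OF that] f(1)] by (simp add: o_def)
  ultimately show ?case
    using strict_mono_o[OF \<sigma>(1) f(1)] by (intro exI[of _ "\<sigma> \<circ> f"]) (auto simp: o_def)
qed

lemma member_le_double_sum:
  fixes f :: "nat \<Rightarrow> nat \<Rightarrow> real"
  assumes "\<And>i j. i < m \<Longrightarrow> j < n \<Longrightarrow> 0 \<le> f i j" "i < m" "j < n"
  shows "f i j \<le> (\<Sum>i<m. \<Sum>j<n. f i j)"
proof -
  have "f i j \<le> (\<Sum>j<n. f i j)" using assms by (intro member_le_sum) auto
  also have "\<dots> \<le> (\<Sum>i<m. \<Sum>j<n. f i j)"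
    using assms by (intro member_le_sum[where f = "\<lambda>i. \<Sum>j<n. f i j"] sum_nonneg) auto
  finally show ?thesis .
qed

definition ipf_feasible ::
  "nat \<Rightarrow> nat \<Rightarrow> (nat \<Rightarrow> nat \<Rightarrow> real) \<Rightarrow> (nat \<Rightarrow> real) \<Rightarrow> (nat \<Rightarrow> real)
     \<Rightarrow> (nat \<Rightarrow> nat \<Rightarrow> real) \<Rightarrow> bool" where
  "ipf_feasible m n A p q Z \<longleftrightarrow>
     (\<forall>i<m. \<forall>j<n. 0 \<le> Z i j \<and> (0 < Z i j \<longrightarrow> 0 < A i j)) \<and>
     (\<forall>i<m. (\<Sum>j<n. Z i j) = p i) \<and> (\<forall>j<n. (\<Sum>i<m. Z i j) = q j)"

lemma ipf_feasible_nonneg: "ipf_feasible m n A p q Z \<Longrightarrow> i < m \<Longrightarrow> j < n \<Longrightarrow> 0 \<le> Z i j"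
  unfolding ipf_feasible_def by blast

lemma ipf_feasible_support:
  assumes "ipf_feasible m n A p q Z" "i < m" "j < n" "0 < Z i j"
  shows "0 < p i" "0 < q j" "0 < A i j"
proof -
  have "Z i j \<le> (\<Sum>j<n. Z i j)" "Z i j \<le> (\<Sum>i<m. Z i j)"
    using assms ipf_feasible_nonneg[OF assms(1)] by (auto intro!: member_le_sum)
  then show "0 < p i" "0 < q j" "0 < A i j"
    using assms unfolding ipf_feasible_def by auto
qed

lemma ipf_feasible_total:
  "ipf_feasible m n A p q Z \<Longrightarrow> (\<Sum>i<m. \<Sum>j<n. Z i j) = (\<Sum>i<m. p i)"
  unfolding ipf_feasible_def by simp

locale ipf_problem =
  fixes m n :: nat and A :: "nat \<Rightarrow> nat \<Rightarrow> real" and p q :: "nat \<Rightarrow> real"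
    and Y :: "nat \<Rightarrow> nat \<Rightarrow> real"
  assumes A_nonneg: "\<And>i j. i < m \<Longrightarrow> j < n \<Longrightarrow> 0 \<le> A i j"
    and feasible_Y: "ipf_feasible m n A p q Y"
begin

definition d0 where "d0 k = fst (ipf_scalings m n A p q k)"
definition d1 where "d1 k = snd (ipf_scalings m n A p q k)"
definition M where "M k = ipf_matrix m n A p q k"
definition row_sum where "row_sum k i = (\<Sum>j<n. M k i j)"
definition col_sum where "col_sum k j = (\<Sum>i<m. M k i j)"
definition mass where "mass = (\<Sum>i<m. p i)"

lemma M_eq: "M k i j = d0 k i * A i j * d1 k j"
  by (simp add: M_def ipf_matrix_def d0_def d1_def)

lemma d0_0: "d0 0 = (\<lambda>_. 1)" and d1_0: "d1 0 = (\<lambda>_. 1)"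
  by (simp_all add: d0_def d1_def)

lemma scalings_Suc_even:
  "even k \<Longrightarrow> d0 (Suc k) = ipf_row_update n A p (d1 k) \<and> d1 (Suc k) = d1 k"
  by (simp add: d0_def d1_def case_prod_beta Let_def)

lemma scalings_Suc_odd:
  "odd k \<Longrightarrow> d0 (Suc k) = d0 k \<and> d1 (Suc k) = ipf_col_update m A q (d0 k)"
  by (simp add: d0_def d1_def case_prod_beta Let_def)

lemma row_sum_eq: "row_sum k i = d0 k i * (\<Sum>j<n. A i j * d1 k j)"
  by (simp add: row_sum_def M_eq sum_distrib_left mult.assoc)

lemma col_sum_eq: "col_sum k j = d1 k j * (\<Sum>i<m. A i j * d0 k i)"
  by (simp add: col_sum_def M_eq sum_distrib_left mult_ac)

lemma p_nonneg: "i < m \<Longrightarrow> 0 \<le> p i"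
  using feasible_Y ipf_feasible_nonneg unfolding ipf_feasible_def by (metis sum_nonneg lessThan_iff)

lemma q_nonneg: "j < n \<Longrightarrow> 0 \<le> q j"
  using feasible_Y ipf_feasible_nonneg unfolding ipf_feasible_def by (metis sum_nonneg lessThan_iff)

lemma mass_eq_sum_q: "mass = (\<Sum>j<n. q j)"
proof -
  have "mass = (\<Sum>i<m. \<Sum>j<n. Y i j)"
    using feasible_Y by (simp add: mass_def ipf_feasible_def)
  also have "\<dots> = (\<Sum>j<n. \<Sum>i<m. Y i j)" by (rule sum.swap)
  finally show ?thesis using feasible_Y by (simp add: ipf_feasible_def)
qed

text \<open>A positive margin is supported by a positive entry of \<open>Y\<close>, which lies in the support
  of \<open>A\<close> and in a column (row) with positive target margin; this keeps every denominator
  of the updates away from 0.\<close>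

lemma row_denominator_pos:
  assumes "i < m" "0 < p i" "\<And>j. j < n \<Longrightarrow> 0 \<le> e j" "\<And>j. j < n \<Longrightarrow> 0 < q j \<Longrightarrow> 0 < e j"
  shows "0 < (\<Sum>j<n. A i j * e j)"
proof -
  have "\<exists>j<n. 0 < Y i j"
  proof (rule ccontr)
    assume "\<not> ?thesis"
    then have "(\<Sum>j<n. Y i j) \<le> 0" by (intro sum_nonpos) auto
    with assms(1,2) feasible_Y show False by (simp add: ipf_feasible_def)
  qed
  then obtain j where j: "j < n" "0 < Y i j" by blast
  then have "0 < A i j * e j"
    using ipf_feasible_support[OF feasible_Y assms(1)] assms by (intro mult_pos_pos) auto
  also have "\<dots> \<le> (\<Sum>j<n. A i j * e j)"
    using j assms A_nonneg by (intro member_le_sum) auto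
  finally show ?thesis .
qed

lemma col_denominator_pos:
  assumes "j < n" "0 < q j" "\<And>i. i < m \<Longrightarrow> 0 \<le> e i" "\<And>i. i < m \<Longrightarrow> 0 < p i \<Longrightarrow> 0 < e i"
  shows "0 < (\<Sum>i<m. A i j * e i)"
proof -
  have "\<exists>i<m. 0 < Y i j"
  proof (rule ccontr)
    assume "\<not> ?thesis"
    then have "(\<Sum>i<m. Y i j) \<le> 0" by (intro sum_nonpos) auto
    with assms(1,2) feasible_Y show False by (simp add: ipf_feasible_def)
  qed
  then obtain i where i: "i < m" "0 < Y i j" by blast
  then have "0 < A i j * e i"
    using ipf_feasible_support[OF feasible_Y _ assms(1)] assms by (intro mult_pos_pos) auto
  also have "\<dots> \<le> (\<Sum>i<m. A i j * e i)"
    using i assms A_nonneg by (intro member_le_sum) auto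
  finally show ?thesis .
qed

lemma scalings_nonneg_pos:
  "(\<forall>i<m. 0 \<le> d0 k i \<and> (0 < p i \<longrightarrow> 0 < d0 k i)) \<and>
   (\<forall>j<n. 0 \<le> d1 k j \<and> (0 < q j \<longrightarrow> 0 < d1 k j))"
proof (induction k)
  case 0
  show ?case by (simp add: d0_0 d1_0)
next
  case (Suc k)
  show ?case
  proof (cases "even k")
    case True
    have "0 \<le> d0 (Suc k) i \<and> (0 < p i \<longrightarrow> 0 < d0 (Suc k) i)" if "i < m" for i
    proof -
      have "0 \<le> (\<Sum>j<n. A i j * d1 k j)"
        using Suc.IH A_nonneg that by (intro sum_nonneg mult_nonneg_nonneg) auto
      moreover have "0 < p i \<Longrightarrow> 0 < (\<Sum>j<n. A i j * d1 k j)"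
        using Suc.IH that by (intro row_denominator_pos) auto
      ultimately show ?thesis
        using p_nonneg[OF that] scalings_Suc_even[OF True] by (auto simp: ipf_row_update_def)
    qed
    then show ?thesis using Suc.IH scalings_Suc_even[OF True] by auto
  next
    case False
    have "0 \<le> d1 (Suc k) j \<and> (0 < q j \<longrightarrow> 0 < d1 (Suc k) j)" if "j < n" for j
    proof -
      have "0 \<le> (\<Sum>i<m. A i j * d0 k i)"
        using Suc.IH A_nonneg that by (intro sum_nonneg mult_nonneg_nonneg) auto
      moreover have "0 < q j \<Longrightarrow> 0 < (\<Sum>i<m. A i j * d0 k i)"
        using Suc.IH that by (intro col_denominator_pos) auto
      ultimately show ?thesis
        using q_nonneg[OF that] scalings_Suc_odd[OF False] by (auto simp: ipf_col_update_def)
    qed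
    then show ?thesis using Suc.IH scalings_Suc_odd[OF False] by auto
  qed
qed

lemma d0_nonneg: "i < m \<Longrightarrow> 0 \<le> d0 k i"
  and d0_pos: "i < m \<Longrightarrow> 0 < p i \<Longrightarrow> 0 < d0 k i"
  and d1_nonneg: "j < n \<Longrightarrow> 0 \<le> d1 k j"
  and d1_pos: "j < n \<Longrightarrow> 0 < q j \<Longrightarrow> 0 < d1 k j"
  using scalings_nonneg_pos by blast+

lemma M_nonneg: "i < m \<Longrightarrow> j < n \<Longrightarrow> 0 \<le> M k i j"
  by (simp add: M_eq A_nonneg d0_nonneg d1_nonneg)

lemma M_pos_if_feasible_pos:
  "ipf_feasible m n A p q Z \<Longrightarrow> i < m \<Longrightarrow> j < n \<Longrightarrow> 0 < Z i j \<Longrightarrow> 0 < M k i j"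
  using ipf_feasible_support[of m n A p q Z i j] d0_pos[of i] d1_pos[of j] by (simp add: M_eq)

lemma row_sum_nonneg: "i < m \<Longrightarrow> 0 \<le> row_sum k i"
  unfolding row_sum_def by (auto intro!: sum_nonneg M_nonneg)

lemma col_sum_nonneg: "j < n \<Longrightarrow> 0 \<le> col_sum k j"
  unfolding col_sum_def by (auto intro!: sum_nonneg M_nonneg)

lemma row_sum_pos: "i < m \<Longrightarrow> 0 < p i \<Longrightarrow> 0 < row_sum k i"
  unfolding row_sum_eq using d0_pos d1_nonneg d1_pos by (intro mult_pos_pos row_denominator_pos) auto

lemma col_sum_pos: "j < n \<Longrightarrow> 0 < q j \<Longrightarrow> 0 < col_sum k j"
  unfolding col_sum_eq using d1_pos d0_nonneg d0_pos by (intro mult_pos_pos col_denominator_pos) auto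

lemma row_sum_odd: assumes "odd k" "i < m" shows "row_sum k i = p i"
proof -
  obtain k' where k: "k = Suc k'" "even k'" using assms(1) by (cases k) auto
  have "p i \<noteq> 0 \<Longrightarrow> 0 < (\<Sum>j<n. A i j * d1 k' j)"
    using assms p_nonneg[OF assms(2)] d1_nonneg d1_pos by (intro row_denominator_pos) auto
  then show ?thesis using scalings_Suc_even[OF k(2)] unfolding row_sum_eq k
    by (cases "p i = 0") (auto simp: ipf_row_update_def)
qed

lemma col_sum_even: assumes "even k" "k \<noteq> 0" "j < n" shows "col_sum k j = q j"
proof -
  obtain k' where k: "k = Suc k'" "odd k'" using assms(1,2) by (cases k) auto
  have "q j \<noteq> 0 \<Longrightarrow> 0 < (\<Sum>i<m. A i j * d0 k' i)"
    using assms q_nonneg[OF assms(3)] d0_nonneg d0_pos by (intro col_denominator_pos) auto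
  then show ?thesis using scalings_Suc_odd[OF k(2)] unfolding col_sum_eq k
    by (cases "q j = 0") (auto simp: ipf_col_update_def)
qed

lemma sum_row_sum: assumes "k \<noteq> 0" shows "(\<Sum>i<m. row_sum k i) = mass"
proof (cases "odd k")
  case True
  then show ?thesis by (simp add: mass_def row_sum_odd)
next
  case False
  have "(\<Sum>i<m. row_sum k i) = (\<Sum>j<n. col_sum k j)"
    unfolding row_sum_def col_sum_def by (rule sum.swap)
  also have "\<dots> = mass" using col_sum_even False assms by (simp add: mass_eq_sum_q)
  finally show ?thesis .
qed

lemma sum_col_sum: "k \<noteq> 0 \<Longrightarrow> (\<Sum>j<n. col_sum k j) = mass"
  using sum_row_sum unfolding row_sum_def col_sum_def by (simp add: sum.swap[of _ "{..<m}"])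

lemma M_le_mass: "k \<noteq> 0 \<Longrightarrow> i < m \<Longrightarrow> j < n \<Longrightarrow> M k i j \<le> mass"
  using member_le_double_sum[of m n "M k" i j] M_nonneg sum_row_sum by (simp add: row_sum_def)

definition potential where
  "potential k = (\<Sum>i<m. p i * ln (d0 k i)) + (\<Sum>j<n. q j * ln (d1 k j))"

definition divergence where
  "divergence Z k = (\<Sum>i<m. \<Sum>j<n. kl_term (Z i j) (M k i j))"

definition log_ratio where
  "log_ratio Z = (\<Sum>i<m. \<Sum>j<n. Z i j * ln (Z i j)) - (\<Sum>i<m. \<Sum>j<n. Z i j * ln (A i j))"

lemma sum_mult_ln_M:
  assumes "ipf_feasible m n A p q Z"
  shows "(\<Sum>i<m. \<Sum>j<n. Z i j * ln (M k i j)) = potential k + (\<Sum>i<m. \<Sum>j<n. Z i j * ln (A i j))"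
proof -
  have "Z i j * ln (M k i j) = Z i j * ln (d0 k i) + Z i j * ln (d1 k j) + Z i j * ln (A i j)"
    if "i < m" "j < n" for i j
  proof (cases "Z i j = 0")
    case False
    then have "0 < Z i j" using ipf_feasible_nonneg[OF assms that] by simp
    then have "0 < d0 k i" "0 < d1 k j" "0 < A i j"
      using ipf_feasible_support[OF assms that] d0_pos d1_pos that by auto
    then show ?thesis by (simp add: M_eq ln_mult_pos algebra_simps)
  qed simp
  then have "(\<Sum>i<m. \<Sum>j<n. Z i j * ln (M k i j)) =
      (\<Sum>i<m. (\<Sum>j<n. Z i j) * ln (d0 k i)) + (\<Sum>j<n. (\<Sum>i<m. Z i j) * ln (d1 k j))
      + (\<Sum>i<m. \<Sum>j<n. Z i j * ln (A i j))"
    by (simp add: sum.distrib sum_distrib_right sum.swap[of _ "{..<n}"])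
  then show ?thesis using assms by (simp add: potential_def ipf_feasible_def)
qed

lemma divergence_eq:
  assumes "ipf_feasible m n A p q Z" "k \<noteq> 0"
  shows "divergence Z k = log_ratio Z - potential k"
proof -
  have "divergence Z k = (\<Sum>i<m. \<Sum>j<n. Z i j * ln (Z i j)) - (\<Sum>i<m. \<Sum>j<n. Z i j * ln (M k i j))
      - (\<Sum>i<m. \<Sum>j<n. Z i j) + (\<Sum>i<m. row_sum k i)"
    by (simp add: divergence_def kl_term_def row_sum_def algebra_simps sum.distrib sum_subtractf)
  then show ?thesis
    using sum_mult_ln_M[OF assms(1)] ipf_feasible_total[OF assms(1)] sum_row_sum[OF assms(2)]
    by (simp add: log_ratio_def mass_def)
qed

lemma kl_term_M_nonneg:
  "ipf_feasible m n A p q Z \<Longrightarrow> i < m \<Longrightarrow> j < n \<Longrightarrow> 0 \<le> kl_term (Z i j) (M k i j)"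
  using ipf_feasible_nonneg M_nonneg M_pos_if_feasible_pos by (intro kl_term_nonneg) auto

lemma sqrt_diff_square_le_divergence:
  assumes "ipf_feasible m n A p q Z" "i < m" "j < n"
  shows "(sqrt (Z i j) - sqrt (M k i j))\<^sup>2 \<le> divergence Z k"
proof -
  have "(sqrt (Z i j) - sqrt (M k i j))\<^sup>2 \<le> kl_term (Z i j) (M k i j)"
    using assms ipf_feasible_nonneg M_nonneg M_pos_if_feasible_pos
    by (intro sqrt_diff_square_le_kl_term) auto
  also have "\<dots> \<le> divergence Z k"
    unfolding divergence_def using assms kl_term_M_nonneg[OF assms(1)]
    by (intro member_le_double_sum[where f = "\<lambda>i j. kl_term (Z i j) (M k i j)"])
  finally show ?thesis .
qed

lemma kl_term_row_sum_nonneg: "i < m \<Longrightarrow> 0 \<le> kl_term (p i) (row_sum k i)"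
  using p_nonneg row_sum_nonneg row_sum_pos by (intro kl_term_nonneg) auto

lemma kl_term_col_sum_nonneg: "j < n \<Longrightarrow> 0 \<le> kl_term (q j) (col_sum k j)"
  using q_nonneg col_sum_nonneg col_sum_pos by (intro kl_term_nonneg) auto

lemma potential_step_even:
  assumes "even k" "k \<noteq> 0"
  shows "potential (Suc k) - potential k = (\<Sum>i<m. kl_term (p i) (row_sum k i))"
proof -
  have step: "p i * ln (d0 (Suc k) i) - p i * ln (d0 k i) = kl_term (p i) (row_sum k i) - row_sum k i + p i"
    if "i < m" for i
  proof (cases "p i = 0")
    case False
    then have "0 < p i" using p_nonneg[OF that] by simp
    define S where "S = (\<Sum>j<n. A i j * d1 k j)"
    have "0 < S" unfolding S_def
      using that \<open>0 < p i\<close> d1_nonneg d1_pos by (intro row_denominator_pos) auto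
    moreover have "0 < d0 k i" using d0_pos that \<open>0 < p i\<close> by auto
    moreover have "d0 (Suc k) i = p i / S"
      using scalings_Suc_even[OF assms(1)] False by (simp add: ipf_row_update_def S_def)
    moreover have "row_sum k i = d0 k i * S" by (simp add: row_sum_eq S_def)
    ultimately show ?thesis
      using \<open>0 < p i\<close> by (simp add: kl_term_def ln_divide_pos ln_mult_pos algebra_simps)
  qed simp
  have "potential (Suc k) - potential k = (\<Sum>i<m. p i * ln (d0 (Suc k) i) - p i * ln (d0 k i))"
    unfolding potential_def using scalings_Suc_even[OF assms(1)] by (simp add: sum_subtractf)
  also have "\<dots> = (\<Sum>i<m. kl_term (p i) (row_sum k i)) - (\<Sum>i<m. row_sum k i) + (\<Sum>i<m. p i)"
    by (simp add: step sum.distrib sum_subtractf)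
  also have "\<dots> = (\<Sum>i<m. kl_term (p i) (row_sum k i))"
    using sum_row_sum[OF assms(2)] by (simp add: mass_def)
  finally show ?thesis .
qed

lemma potential_step_odd:
  assumes "odd k"
  shows "potential (Suc k) - potential k = (\<Sum>j<n. kl_term (q j) (col_sum k j))"
proof -
  have step: "q j * ln (d1 (Suc k) j) - q j * ln (d1 k j) = kl_term (q j) (col_sum k j) - col_sum k j + q j"
    if "j < n" for j
  proof (cases "q j = 0")
    case False
    then have "0 < q j" using q_nonneg[OF that] by simp
    define S where "S = (\<Sum>i<m. A i j * d0 k i)"
    have "0 < S" unfolding S_def
      using that \<open>0 < q j\<close> d0_nonneg d0_pos by (intro col_denominator_pos) auto
    moreover have "0 < d1 k j" using d1_pos that \<open>0 < q j\<close> by auto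
    moreover have "d1 (Suc k) j = q j / S"
      using scalings_Suc_odd[OF assms(1)] False by (simp add: ipf_col_update_def S_def)
    moreover have "col_sum k j = d1 k j * S" by (simp add: col_sum_eq S_def)
    ultimately show ?thesis
      using \<open>0 < q j\<close> by (simp add: kl_term_def ln_divide_pos ln_mult_pos algebra_simps)
  qed simp
  have "k \<noteq> 0" using assms by (cases k) auto
  have "potential (Suc k) - potential k = (\<Sum>j<n. q j * ln (d1 (Suc k) j) - q j * ln (d1 k j))"
    unfolding potential_def using scalings_Suc_odd[OF assms(1)] by (simp add: sum_subtractf)
  also have "\<dots> = (\<Sum>j<n. kl_term (q j) (col_sum k j)) - (\<Sum>j<n. col_sum k j) + (\<Sum>j<n. q j)"
    by (simp add: step sum.distrib sum_subtractf)
  also have "\<dots> = (\<Sum>j<n. kl_term (q j) (col_sum k j))"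
    using sum_col_sum[OF \<open>k \<noteq> 0\<close>] by (simp add: mass_eq_sum_q)
  finally show ?thesis .
qed

lemma potential_step_nonneg: assumes "k \<noteq> 0" shows "0 \<le> potential (Suc k) - potential k"
proof (cases "even k")
  case True
  then show ?thesis
    using potential_step_even[OF True assms] kl_term_row_sum_nonneg by (auto intro!: sum_nonneg)
next
  case False
  then show ?thesis
    using potential_step_odd[OF False] kl_term_col_sum_nonneg by (auto intro!: sum_nonneg)
qed

lemma row_sum_deviation_le_potential_step:
  assumes "k \<noteq> 0" "i < m"
  shows "(sqrt (p i) - sqrt (row_sum k i))\<^sup>2 \<le> potential (Suc k) - potential k"
proof (cases "even k")
  case True
  have "(sqrt (p i) - sqrt (row_sum k i))\<^sup>2 \<le> kl_term (p i) (row_sum k i)"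
    using assms p_nonneg row_sum_nonneg row_sum_pos by (intro sqrt_diff_square_le_kl_term) auto
  also have "\<dots> \<le> (\<Sum>i<m. kl_term (p i) (row_sum k i))"
    using assms kl_term_row_sum_nonneg by (intro member_le_sum) auto
  finally show ?thesis using potential_step_even[OF True assms(1)] by simp
next
  case False
  then show ?thesis using row_sum_odd[OF False assms(2)] potential_step_nonneg[OF assms(1)] by simp
qed

lemma col_sum_deviation_le_potential_step:
  assumes "k \<noteq> 0" "j < n"
  shows "(sqrt (q j) - sqrt (col_sum k j))\<^sup>2 \<le> potential (Suc k) - potential k"
proof (cases "even k")
  case False
  have "(sqrt (q j) - sqrt (col_sum k j))\<^sup>2 \<le> kl_term (q j) (col_sum k j)"
    using assms q_nonneg col_sum_nonneg col_sum_pos by (intro sqrt_diff_square_le_kl_term) auto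
  also have "\<dots> \<le> (\<Sum>j<n. kl_term (q j) (col_sum k j))"
    using assms kl_term_col_sum_nonneg by (intro member_le_sum) auto
  finally show ?thesis using potential_step_odd[OF False] by simp
next
  case True
  then show ?thesis using col_sum_even[OF True assms] potential_step_nonneg[OF assms(1)] by simp
qed

lemma potential_convergent: obtains g where "(\<lambda>k. potential (Suc k)) \<longlonglongrightarrow> g"
proof -
  have "incseq (\<lambda>k. potential (Suc k))"
    using potential_step_nonneg by (intro incseq_SucI) (metis diff_ge_0_iff_ge nat.distinct(1))
  moreover have "potential (Suc k) \<le> log_ratio Y" for k
  proof -
    have "0 \<le> divergence Y (Suc k)"
      unfolding divergence_def using kl_term_M_nonneg[OF feasible_Y] by (auto intro!: sum_nonneg)
    then show ?thesis using divergence_eq[OF feasible_Y, of "Suc k"] by simp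
  qed
  then have "bdd_above (range (\<lambda>k. potential (Suc k)))" by (intro bdd_aboveI2)
  ultimately show ?thesis using LIMSEQ_incseq_SUP that by blast
qed

lemma potential_step_tendsto_0: "(\<lambda>k. potential (Suc (Suc k)) - potential (Suc k)) \<longlonglongrightarrow> 0"
proof -
  obtain g where g: "(\<lambda>k. potential (Suc k)) \<longlonglongrightarrow> g" using potential_convergent by blast
  have "(\<lambda>k. potential (Suc (Suc k)) - potential (Suc k)) \<longlonglongrightarrow> g - g"
    by (intro tendsto_diff g LIMSEQ_Suc[OF g])
  then show ?thesis by simp
qed

lemma row_sum_tendsto:
  assumes "i < m"
  shows "(\<lambda>k. row_sum k i) \<longlonglongrightarrow> p i"
proof -
  have "(\<lambda>k. row_sum (Suc k) i) \<longlonglongrightarrow> p i"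
    by (rule LIMSEQ_if_sqrt_diff_square_le[OF _ _ _ potential_step_tendsto_0])
      (use assms p_nonneg row_sum_nonneg row_sum_deviation_le_potential_step in auto)
  then show ?thesis by (rule filterlim_sequentially_Suc[THEN iffD1])
qed

lemma col_sum_tendsto:
  assumes "j < n"
  shows "(\<lambda>k. col_sum k j) \<longlonglongrightarrow> q j"
proof -
  have "(\<lambda>k. col_sum (Suc k) j) \<longlonglongrightarrow> q j"
    by (rule LIMSEQ_if_sqrt_diff_square_le[OF _ _ _ potential_step_tendsto_0])
      (use assms q_nonneg col_sum_nonneg col_sum_deviation_le_potential_step in auto)
  then show ?thesis by (rule filterlim_sequentially_Suc[THEN iffD1])
qed

lemma limit_point_exists:
  obtains \<tau> L where "strict_mono \<tau>" "\<And>k. \<tau> k \<noteq> 0"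
    "\<And>i j. i < m \<Longrightarrow> j < n \<Longrightarrow> (\<lambda>k. M (\<tau> k) i j) \<longlonglongrightarrow> L i j"
proof -
  have bound: "\<bar>M (Suc k) (fst s) (snd s)\<bar> \<le> mass" if "s \<in> {..<m} \<times> {..<n}" for k s
    using that M_nonneg M_le_mass by auto
  obtain \<sigma> where \<sigma>: "strict_mono \<sigma>"
    "\<forall>s\<in>{..<m} \<times> {..<n}. convergent (\<lambda>k. M (Suc (\<sigma> k)) (fst s) (snd s))"
    using bounded_family_convergent_subseq[of "{..<m} \<times> {..<n}" "\<lambda>k s. M (Suc k) (fst s) (snd s)" mass] bound
    by auto
  define L where "L i j = lim (\<lambda>k. M (Suc (\<sigma> k)) i j)" for i j
  have "(\<lambda>k. M (Suc (\<sigma> k)) i j) \<longlonglongrightarrow> L i j" if "i < m" "j < n" for i j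
    using \<sigma>(2) that unfolding L_def by (auto simp: convergent_LIMSEQ_iff)
  moreover have "strict_mono (\<lambda>k. Suc (\<sigma> k))" using \<sigma>(1) by (simp add: strict_mono_def)
  ultimately show thesis using that[of "\<lambda>k. Suc (\<sigma> k)" L] by blast
qed

lemma limit_point_feasible:
  assumes "strict_mono \<tau>"
    and M_tendsto: "\<And>i j. i < m \<Longrightarrow> j < n \<Longrightarrow> (\<lambda>k. M (\<tau> k) i j) \<longlonglongrightarrow> L i j"
  shows "ipf_feasible m n A p q L"
proof -
  have "0 \<le> L i j" if "i < m" "j < n" for i j
    using M_tendsto[OF that] M_nonneg that by (intro LIMSEQ_le_const) auto
  moreover have "0 < A i j" if "i < m" "j < n" "0 < L i j" for i j
  proof (rule ccontr)
    assume "\<not> 0 < A i j"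
    then have "A i j = 0" using A_nonneg that by force
    then have "(\<lambda>k. M (\<tau> k) i j) = (\<lambda>k. 0)" by (simp add: M_eq)
    then have "L i j = 0" using M_tendsto[OF that(1,2)] LIMSEQ_unique[of "\<lambda>k. 0::real"] by auto
    with that show False by simp
  qed
  moreover have "(\<Sum>j<n. L i j) = p i" if "i < m" for i
  proof -
    have "(\<lambda>k. row_sum (\<tau> k) i) \<longlonglongrightarrow> (\<Sum>j<n. L i j)"
      unfolding row_sum_def using M_tendsto that by (intro tendsto_sum) auto
    moreover have "(\<lambda>k. row_sum (\<tau> k) i) \<longlonglongrightarrow> p i"
      using LIMSEQ_subseq_LIMSEQ[OF row_sum_tendsto[OF that] assms(1)] by (simp add: o_def)
    ultimately show ?thesis using LIMSEQ_unique by blast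
  qed
  moreover have "(\<Sum>i<m. L i j) = q j" if "j < n" for j
  proof -
    have "(\<lambda>k. col_sum (\<tau> k) j) \<longlonglongrightarrow> (\<Sum>i<m. L i j)"
      unfolding col_sum_def using M_tendsto that by (intro tendsto_sum) auto
    moreover have "(\<lambda>k. col_sum (\<tau> k) j) \<longlonglongrightarrow> q j"
      using LIMSEQ_subseq_LIMSEQ[OF col_sum_tendsto[OF that] assms(1)] by (simp add: o_def)
    ultimately show ?thesis using LIMSEQ_unique by blast
  qed
  ultimately show ?thesis unfolding ipf_feasible_def by blast
qed

text \<open>Since the divergence equals a constant minus the convergent potential, it converges
  along the whole sequence, so its vanishing along the subsequence forces its limit to be 0.\<close>

lemma divergence_tendsto_0:
  assumes "ipf_feasible m n A p q L" "strict_mono \<tau>" "\<And>k. \<tau> k \<noteq> 0"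
    and "\<And>i j. i < m \<Longrightarrow> j < n \<Longrightarrow> (\<lambda>k. M (\<tau> k) i j) \<longlonglongrightarrow> L i j"
  shows "(\<lambda>k. divergence L (Suc k)) \<longlonglongrightarrow> 0"
proof -
  obtain g where "(\<lambda>k. potential (Suc k)) \<longlonglongrightarrow> g" using potential_convergent by blast
  then have g: "potential \<longlonglongrightarrow> g" by (rule filterlim_sequentially_Suc[THEN iffD1])
  have whole: "(\<lambda>k. divergence L (Suc k)) \<longlonglongrightarrow> log_ratio L - g"
    using divergence_eq[OF assms(1)] LIMSEQ_Suc[OF g] by (simp add: tendsto_diff)
  have "(\<lambda>k. divergence L (\<tau> k)) \<longlonglongrightarrow> log_ratio L - g"
    using divergence_eq[OF assms(1,3)] LIMSEQ_subseq_LIMSEQ[OF g assms(2)]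
    by (simp add: o_def tendsto_diff)
  moreover have "(\<lambda>k. divergence L (\<tau> k)) \<longlonglongrightarrow> (\<Sum>i<m. \<Sum>j<n. 0)"
    unfolding divergence_def using assms(4) ipf_feasible_nonneg[OF assms(1)]
    by (intro tendsto_sum tendsto_kl_term_0) auto
  ultimately have "log_ratio L - g = 0" using LIMSEQ_unique by fastforce
  then show ?thesis using whole by simp
qed

end

theorem ipf_converges_if_feasible:
  assumes "\<And>i j. i < m \<Longrightarrow> j < n \<Longrightarrow> 0 \<le> A i j" "ipf_feasible m n A p q Y"
  shows "ipf_converges m n A p q"
proof -
  interpret ipf_problem m n A p q Y using assms by unfold_locales
  obtain \<tau> L where \<tau>: "strict_mono \<tau>" "\<And>k. \<tau> k \<noteq> 0"
    and M_tendsto: "\<And>i j. i < m \<Longrightarrow> j < n \<Longrightarrow> (\<lambda>k. M (\<tau> k) i j) \<longlonglongrightarrow> L i j"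
    using limit_point_exists by blast
  have L: "ipf_feasible m n A p q L" using limit_point_feasible[OF \<tau>(1) M_tendsto] .
  have "(\<lambda>k. M k i j) \<longlonglongrightarrow> L i j" if "i < m" "j < n" for i j
  proof -
    have "(\<lambda>k. M (Suc k) i j) \<longlonglongrightarrow> L i j"
      by (rule LIMSEQ_if_sqrt_diff_square_le[OF _ _ _ divergence_tendsto_0[OF L \<tau> M_tendsto]])
        (use that ipf_feasible_nonneg[OF L] M_nonneg sqrt_diff_square_le_divergence[OF L] in auto)
    then show ?thesis by (rule filterlim_sequentially_Suc[THEN iffD1])
  qed
  then show ?thesis
    using L unfolding ipf_converges_def ipf_feasible_def by (intro exI[of _ L]) (auto simp: M_def)
qed

theorem mainTheorem6:
  fixes T :: "'a set" and X :: "'a \<Rightarrow> nat \<Rightarrow> nat \<Rightarrow> real" and m n :: nat and t :: 'a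
  assumes "finite T"
    and "\<And>s i j. s \<in> T \<Longrightarrow> i < m \<Longrightarrow> j < n \<Longrightarrow> X s i j \<ge> 0"
    and "t \<in> T"
  shows "ipf_converges m n (\<lambda>i j. \<Sum>s\<in>T. X s i j)
           (\<lambda>i. \<Sum>j<n. X t i j) (\<lambda>j. \<Sum>i<m. X t i j)"
proof (rule ipf_converges_if_feasible)
  show "0 \<le> (\<Sum>s\<in>T. X s i j)" if "i < m" "j < n" for i j
    using assms(2) that by (intro sum_nonneg) auto
  have "0 \<le> X t i j \<and> (0 < X t i j \<longrightarrow> 0 < (\<Sum>s\<in>T. X s i j))" if "i < m" "j < n" for i j
  proof -
    have "X t i j \<le> (\<Sum>s\<in>T. X s i j)"
      using assms that by (intro member_le_sum) auto
    then show ?thesis using assms(2,3) that by auto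
  qed
  then show "ipf_feasible m n (\<lambda>i j. \<Sum>s\<in>T. X s i j)
      (\<lambda>i. \<Sum>j<n. X t i j) (\<lambda>j. \<Sum>i<m. X t i j) (X t)"
    unfolding ipf_feasible_def by blast
qed

end
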